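(* If $\pi\le\beta_1<\beta_2\le\beta_{cr}$, then $g(\beta_1,\theta)<g(\beta_2,\theta)$ for all $\theta\in(0,\pi/2]$.
   Context: $\beta_{cr}\in(\pi,2\pi)$ is the unique solution in $(\pi,2\pi)$ of $\tan\big(\frac{\beta_{cr}-\pi}{4}\big)=4\big(\Gamma(3/4)/\Gamma(1/4)\big)^2$. For $\pi\le\beta\le\beta_{cr}$, let $\psi_\beta$ be the function on $(0,\beta)$, symmetric about $\beta/2$, with $\psi_\beta(\theta)=\cos\big(\tfrac12(\beta/2-\theta)\big)$ for $\pi/2\le\theta\le\beta-\pi/2$, and which on $(0,\pi/2]$ solves $\psi''+\psi/(4\sin^2\theta)=0$ with $\psi(\pi/2)=\cos((\beta-\pi)/4)$, $\psi'(\pi/2)=\tfrac12\sin((\beta-\pi)/4)$; it is known that $\psi_\beta>0$ on $(0,\beta)$. Set $g(\beta,\theta)=\sin\theta\,\psi_\beta'(\theta)/\psi_\beta(\theta)$ for $0<\theta\le\pi/2$. *)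

theory Defs
  imports "HOL-Analysis.Analysis"
begin

definition beta_cr :: real where
  "beta_cr = (THE b. pi < b \<and> b < 2*pi \<and>
      tan ((b - pi)/4) = 4 * (Gamma (3/4::real) / Gamma (1/4::real))^2)"

text \<open>psi_left beta psi psi' : psi (with derivative psi') solves
  psi'' + psi/(4 sin^2) = 0 on (0, pi/2] with the prescribed data at pi/2,
  i.e. psi is the restriction of psi_beta to (0, pi/2].\<close>
definition psi_left :: "real \<Rightarrow> (real \<Rightarrow> real) \<Rightarrow> (real \<Rightarrow> real) \<Rightarrow> bool" where
  "psi_left beta psi psi' \<longleftrightarrow>
     (\<forall>x\<in>{0<..pi/2}.
        (psi has_real_derivative psi' x) (at x within {0<..pi/2}) \<and>
        (psi' has_real_derivative (- psi x / (4 * (sin x)^2))) (at x within {0<..pi/2})) \<and>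
     psi (pi/2) = cos ((beta - pi)/4) \<and>
     psi' (pi/2) = sin ((beta - pi)/4) / 2"

definition g_fun :: "(real \<Rightarrow> real) \<Rightarrow> (real \<Rightarrow> real) \<Rightarrow> real \<Rightarrow> real" where
  "g_fun psi psi' \<theta> = sin \<theta> * psi' \<theta> / psi \<theta>"

end

theory Submission
  imports Defs
begin

(* Restricted to (0, pi/2], psi_beta solves the linear equation
   psi'' = q psi with q(x) = -1/(4 sin^2 x).  For two solutions y1, y2 of such an
   equation the Wronskian W = y1 y2' - y1' y2 is constant, and
     sin x * y2'/y2 - sin x * y1'/y1 = sin x * W / (y1 y2),
   so g(beta_2, .) - g(beta_1, .) has the sign of W wherever both solutions are
   positive.  Evaluating W at pi/2 from the initial data gives
   W = sin((beta_2 - beta_1)/4) / 2, which is positive as soon as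
   0 < beta_2 - beta_1 < 4 pi.  This holds because beta_cr < 2 pi: the defining
   constant c = 4 (Gamma(3/4)/Gamma(1/4))^2 lies in (0,1) (by the reflection
   formula and log-convexity of Gamma), so beta_cr = pi + 4 arctan c < 2 pi.
   The file first locates beta_cr, then develops the Wronskian facts, and
   finally combines them. *)

lemma Gamma_quarter_reflection: "Gamma (1/4::real) * Gamma (3/4) = pi * sqrt 2"
proof -
  have "Gamma (complex_of_real (1/4)) * Gamma (1 - complex_of_real (1/4))
          = of_real pi / sin (of_real pi * complex_of_real (1/4))"
    by (rule Gamma_reflection_complex)
  also have "1 - complex_of_real (1/4) = complex_of_real (3/4)" by simp
  also have "of_real pi * complex_of_real (1/4) = complex_of_real (pi/4)" by simp
  finally have "complex_of_real (Gamma (1/4)) * complex_of_real (Gamma (3/4))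
                  = of_real pi / complex_of_real (sin (pi/4))"
    by (simp only: Gamma_complex_of_real sin_of_real)
  hence "complex_of_real (Gamma (1/4) * Gamma (3/4)) = complex_of_real (pi / sin (pi/4))"
    by (metis of_real_mult of_real_divide)
  hence "Gamma (1/4::real) * Gamma (3/4) = pi / sin (pi/4)"
    using of_real_eq_iff by blast
  also have "\<dots> = pi * sqrt 2" by (simp add: sin_45 field_simps real_sqrt_divide)
  finally show ?thesis .
qed

text \<open>Log-convexity of Gamma between 1/2 and 1 bounds Gamma at their midpoint 3/4.\<close>
lemma Gamma_three_quarters_pow4_le: "Gamma (3/4::real) ^ 4 \<le> pi"
proof -
  have pos: "0 < Gamma (3/4::real)" by (rule Gamma_real_pos) simp
  have "(ln \<circ> Gamma) ((1 - 1/2) *\<^sub>R (1/2::real) + (1/2) *\<^sub>R 1)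
          \<le> (1 - 1/2) * (ln \<circ> Gamma) (1/2) + (1/2) * (ln \<circ> Gamma) 1"
    by (rule convex_onD[OF log_convex_Gamma_real]) auto
  hence "ln (Gamma (3/4::real)) \<le> ln pi / 4"
    by (simp add: Gamma_one_half_real ln_sqrt)
  hence "ln (Gamma (3/4::real) ^ 4) \<le> ln pi"
    by (simp add: ln_realpow)
  moreover have "0 < Gamma (3/4::real) ^ 4" using pos by (rule zero_less_power)
  ultimately show ?thesis using ln_le_cancel_iff pi_gt_zero by blast
qed

lemma critical_constant_bounds:
  defines "c \<equiv> 4 * (Gamma (3/4::real) / Gamma (1/4::real))^2"
  shows "0 < c" and "c < 1"
proof -
  have pos: "Gamma (1/4::real) > 0" "Gamma (3/4::real) > 0"
    by (rule Gamma_real_pos, simp)+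
  have "Gamma (1/4::real) = pi * sqrt 2 / Gamma (3/4)"
  proof -
    have "Gamma (3/4::real) \<noteq> 0" using pos(2) by linarith
    thus ?thesis using Gamma_quarter_reflection by (simp add: eq_divide_eq)
  qed
  hence "c = 2 * Gamma (3/4) ^ 4 / pi^2"
    unfolding c_def by (simp add: power_divide field_simps power_mult_distrib)
  also have "\<dots> \<le> 2 * pi / pi^2"
    using Gamma_three_quarters_pow4_le by (simp add: divide_right_mono)
  also have "\<dots> = 2 / pi" by (simp add: power2_eq_square)
  also have "\<dots> < 1" using pi_gt3 by simp
  finally show "c < 1" .
  have "Gamma (1/4::real) \<noteq> 0" "Gamma (3/4::real) \<noteq> 0" using pos by linarith+
  thus "0 < c" unfolding c_def by simp
qed

lemma beta_cr_eq:
  "beta_cr = pi + 4 * arctan (4 * (Gamma (3/4::real) / Gamma (1/4::real))^2)"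
proof -
  define c where "c = 4 * (Gamma (3/4::real) / Gamma (1/4::real))^2"
  have "0 < arctan c" "arctan c < pi/4"
    using critical_constant_bounds arctan_less_iff[of c 1] by (auto simp: c_def arctan_one)
  hence sol: "pi < b \<and> b < 2*pi \<and> tan ((b - pi)/4) = c" if "b = pi + 4 * arctan c" for b
    using that by (simp add: tan_arctan)
  have uniq: "b = pi + 4 * arctan c" if "pi < b \<and> b < 2*pi \<and> tan ((b - pi)/4) = c" for b
    using that arctan_tan[of "(b - pi)/4"] by auto
  show ?thesis
    unfolding beta_cr_def c_def[symmetric] by (rule the_equality[OF sol uniq]) simp_all
qed

text \<open>Since \<open>c < 1\<close>, \<open>arctan c < pi/4\<close>; this is the only property of \<open>beta_cr\<close>
  the monotonicity argument needs.\<close>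
lemma beta_cr_less_two_pi: "beta_cr < 2*pi"
proof -
  have "arctan (4 * (Gamma (3/4::real) / Gamma (1/4::real))^2) < arctan 1"
    using critical_constant_bounds(2) arctan_less_iff by blast
  thus ?thesis unfolding beta_cr_eq arctan_one by simp
qed

definition wronskian ::
    "(real \<Rightarrow> real) \<Rightarrow> (real \<Rightarrow> real) \<Rightarrow> (real \<Rightarrow> real) \<Rightarrow> (real \<Rightarrow> real) \<Rightarrow> real \<Rightarrow> real" where
  "wronskian y1 y1' y2 y2' x = y1 x * y2' x - y1' x * y2 x"

definition solves_linear_ode ::
    "(real \<Rightarrow> real) \<Rightarrow> real set \<Rightarrow> (real \<Rightarrow> real) \<Rightarrow> (real \<Rightarrow> real) \<Rightarrow> bool" where
  "solves_linear_ode q S y y' \<longleftrightarrow>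
     (\<forall>x\<in>S. (y has_real_derivative y' x) (at x within S) \<and>
            (y' has_real_derivative q x * y x) (at x within S))"

text \<open>Abel's identity for \<open>y'' = q y\<close>: the Wronskian of two solutions is constant
  on a convex set, since its derivative \<open>y1 (q y2) - (q y1) y2\<close> vanishes.\<close>
lemma wronskian_constant:
  assumes "convex S" and "solves_linear_ode q S y1 y1'" and "solves_linear_ode q S y2 y2'"
  shows "\<exists>C. \<forall>x\<in>S. wronskian y1 y1' y2 y2' x = C"
proof (rule has_field_derivative_zero_constant[OF \<open>convex S\<close>])
  fix x assume "x \<in> S"
  with assms(2,3) have
    "(y1 has_real_derivative y1' x) (at x within S)"
    "(y1' has_real_derivative q x * y1 x) (at x within S)"
    "(y2 has_real_derivative y2' x) (at x within S)"
    "(y2' has_real_derivative q x * y2 x) (at x within S)"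
    unfolding solves_linear_ode_def by auto
  hence "(wronskian y1 y1' y2 y2' has_real_derivative
          y1 x * (q x * y2 x) + y1' x * y2' x - (y1' x * y2' x + q x * y1 x * y2 x))
         (at x within S)"
    unfolding wronskian_def[abs_def] by (intro DERIV_diff DERIV_mult')
  thus "(wronskian y1 y1' y2 y2' has_real_derivative 0) (at x within S)"
    by (simp add: algebra_simps)
qed

lemma psi_left_solves:
  assumes "psi_left beta psi psi'"
  shows "solves_linear_ode (\<lambda>x. - 1 / (4 * (sin x)^2)) {0<..pi/2} psi psi'"
  using assms unfolding psi_left_def solves_linear_ode_def by simp

lemma psi_left_wronskian_at_half:
  assumes "psi_left beta1 psi1 psi1'" and "psi_left beta2 psi2 psi2'"
  shows "wronskian psi1 psi1' psi2 psi2' (pi/2) = sin ((beta2 - beta1)/4) / 2"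
proof -
  have "sin ((beta2 - beta1)/4) = sin ((beta2 - pi)/4 - (beta1 - pi)/4)"
    by (rule arg_cong[where f = sin]) (simp add: field_simps)
  also have "\<dots> = sin ((beta2 - pi)/4) * cos ((beta1 - pi)/4) - cos ((beta2 - pi)/4) * sin ((beta1 - pi)/4)"
    by (rule sin_diff)
  finally have diff: "sin ((beta2 - beta1)/4)
          = sin ((beta2 - pi)/4) * cos ((beta1 - pi)/4) - cos ((beta2 - pi)/4) * sin ((beta1 - pi)/4)" .
  have init: "psi1 (pi/2) = cos ((beta1 - pi)/4)" "psi1' (pi/2) = sin ((beta1 - pi)/4) / 2"
    "psi2 (pi/2) = cos ((beta2 - pi)/4)" "psi2' (pi/2) = sin ((beta2 - pi)/4) / 2"
    using assms unfolding psi_left_def by auto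
  show ?thesis unfolding wronskian_def init diff by (simp add: algebra_simps)
qed

lemma g_fun_diff_wronskian:
  assumes "psi1 x \<noteq> 0" and "psi2 x \<noteq> 0"
  shows "g_fun psi2 psi2' x - g_fun psi1 psi1' x
           = sin x * wronskian psi1 psi1' psi2 psi2' x / (psi1 x * psi2 x)"
  using assms unfolding g_fun_def wronskian_def by (simp add: field_simps)

theorem lemma4:
  fixes \<beta>1 \<beta>2 :: real and \<psi>1 \<psi>1' \<psi>2 \<psi>2' :: "real \<Rightarrow> real"
  assumes "pi \<le> \<beta>1" "\<beta>1 < \<beta>2" "\<beta>2 \<le> beta_cr"
    and "psi_left \<beta>1 \<psi>1 \<psi>1'" and "psi_left \<beta>2 \<psi>2 \<psi>2'"
    and "\<forall>x\<in>{0<..pi/2}. \<psi>1 x > 0" and "\<forall>x\<in>{0<..pi/2}. \<psi>2 x > 0"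
  shows "\<forall>\<theta>\<in>{0<..pi/2}. g_fun \<psi>1 \<psi>1' \<theta> < g_fun \<psi>2 \<psi>2' \<theta>"
proof
  fix \<theta> :: real assume \<theta>: "\<theta> \<in> {0<..pi/2}"
  obtain C where C: "\<forall>x\<in>{0<..pi/2}. wronskian \<psi>1 \<psi>1' \<psi>2 \<psi>2' x = C"
    using wronskian_constant[OF _ psi_left_solves[OF assms(4)] psi_left_solves[OF assms(5)]]
    by auto
  have "0 < (\<beta>2 - \<beta>1)/4" "(\<beta>2 - \<beta>1)/4 < pi"
    using assms(1-3) beta_cr_less_two_pi by auto
  hence "0 < wronskian \<psi>1 \<psi>1' \<psi>2 \<psi>2' (pi/2)"
    using psi_left_wronskian_at_half[OF assms(4,5)] sin_gt_zero[of "(\<beta>2 - \<beta>1)/4"] by simp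
  hence "0 < wronskian \<psi>1 \<psi>1' \<psi>2 \<psi>2' \<theta>"
    using C \<theta> by simp
  moreover have "0 < sin \<theta>" "0 < \<psi>1 \<theta>" "0 < \<psi>2 \<theta>"
    using \<theta> assms(6,7) by (auto intro: sin_gt_zero)
  ultimately have "0 < g_fun \<psi>2 \<psi>2' \<theta> - g_fun \<psi>1 \<psi>1' \<theta>"
    by (simp add: g_fun_diff_wronskian)
  thus "g_fun \<psi>1 \<psi>1' \<theta> < g_fun \<psi>2 \<psi>2' \<theta>" by simp
qed

end
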